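(* Let $0<p_0,q_0,p,q<\infty$ and suppose that one of the following holds: (a) $q>q_0$ and $q/p=q_0/p_0$; or (b) $q=q_0$ and $p>p_0$. Let $f,g$ be measurable functions on a $\sigma$-finite measure space such that there exists $\tau_0\in(0,\infty)$ with $\lambda_f(\tau)\le\lambda_g(\tau)$ for $\tau<\tau_0$ and $\lambda_f(\tau)\ge\lambda_g(\tau)$ for $\tau>\tau_0$. Suppose that the integral $\int_0^\infty (f^*(t)^{q_0}-g^*(t)^{q_0})\,d(t^{q_0/p_0})$ exists and is $\ge 0$, and that $(f^*(t)^q-g^*(t)^q)\,t^{q/p-1}\in L^1(0,\infty)$. Then \[ \int_0^\infty (f^*(t)^q-g^*(t)^q)\,d(t^{q/p})\ge 0 . \] Consequently, if moreover $f,g\in L(p,q)$, then $\|g\|_{L(p,q)}\le\|f\|_{L(p,q)}$.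
   Context: $\lambda_f(\tau)=\mu\{|f|>\tau\}$ and $f^*(s)=\inf\{\tau>0:\lambda_f(\tau)\le s\}$ for $s>0$. For $a>0$, $\int_0^\infty h(t)\,d(t^a)$ means $a\int_0^\infty h(t)t^{a-1}\,dt$. For $0<p,q<\infty$ the Lorentz quasi-norm is $\|f\|_{L(p,q)}=\bigl(\int_0^\infty f^*(s)^q\,d(s^{q/p})\bigr)^{1/q}=\bigl(\int_0^\infty\lambda_f(s)^{q/p}\,d(s^q)\bigr)^{1/q}$, and $L(p,q)$ is the set of $f$ with finite quasi-norm. *)

theory Defs
  imports "HOL-Analysis.Analysis"
begin

definition distr_fun :: "'a measure \<Rightarrow> ('a \<Rightarrow> 'b::real_normed_vector) \<Rightarrow> real \<Rightarrow> ennreal" where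
  "distr_fun M f \<tau> = emeasure M {x \<in> space M. \<tau> < norm (f x)}"

text \<open>Decreasing rearrangement f^*(s) = inf{tau > 0 : lambda_f(tau) <= s}, valued in [0,infinity]
  (the infimum of the empty set is infinity).\<close>
definition rearr :: "'a measure \<Rightarrow> ('a \<Rightarrow> 'b::real_normed_vector) \<Rightarrow> real \<Rightarrow> ennreal" where
  "rearr M f s = Inf (ennreal ` {\<tau>::real. 0 < \<tau> \<and> distr_fun M f \<tau> \<le> ennreal s})"

text \<open>Real power of an extended nonnegative real (exponent a > 0 intended), infinity ^ a = infinity.\<close>
definition epowr :: "ennreal \<Rightarrow> real \<Rightarrow> ennreal" where
  "epowr x a = (if x = \<infinity> then \<infinity> else ennreal (enn2real x powr a))"

text \<open>The quantity  int_0^infinity f^*(s)^q d(s^(q/p)).\<close>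
definition lorentz_integral :: "real \<Rightarrow> real \<Rightarrow> 'a measure \<Rightarrow> ('a \<Rightarrow> 'b::real_normed_vector) \<Rightarrow> ennreal" where
  "lorentz_integral p q M f =
     (\<integral>\<^sup>+ t. indicator {0<..} t * epowr (rearr M f t) q * ennreal ((q / p) * t powr (q / p - 1)) \<partial>lborel)"

definition in_lorentz :: "real \<Rightarrow> real \<Rightarrow> 'a measure \<Rightarrow> ('a \<Rightarrow> 'b::real_normed_vector) \<Rightarrow> bool" where
  "in_lorentz p q M f \<longleftrightarrow> f \<in> borel_measurable M \<and> lorentz_integral p q M f < \<infinity>"

text \<open>Lorentz quasi-norm (meaningful when the integral is finite).\<close>
definition lorentz_norm :: "real \<Rightarrow> real \<Rightarrow> 'a measure \<Rightarrow> ('a \<Rightarrow> 'b::real_normed_vector) \<Rightarrow> real" where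
  "lorentz_norm p q M f = enn2real (lorentz_integral p q M f) powr (1 / q)"

end

theory Submission
  imports Defs
begin

(* Write F = f^* and G = g^*. The hypotheses on the distribution functions force the two
   rearrangements to cross only at height tau0: where G < F we have G >= tau0, and where F < G
   we have G <= tau0.
   In case (a) the two weights coincide, and the tangent-line inequality for the convex map
   x |-> x^(q/q0), taken at G^q0, gives F^q - G^q >= (q/q0) tau0^(q-q0) (F^q0 - G^q0)
   pointwise.
   In case (b) the exponents agree and the weights differ by the decreasing factor
   t^(q/p - q/p0). Since F is decreasing, every point where F > G lies to the left of every
   point where F < G, so comparing the factor with its value at a separating point s0 bounds
   the q-integrand below by a positive multiple of the q0-integrand.
   In both cases the q-integral is therefore nonnegative, and for f, g in L(p,q) it is the
   difference of the two Lorentz integrals. *)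

lemma powr_above_tangent:
  fixes x y s :: real
  assumes "0 \<le> x" "0 \<le> y" "1 \<le> s"
  shows "y powr s + s * y powr (s - 1) * (x - y) \<le> x powr s"
proof (cases "y = 0")
  case True
  then show ?thesis using assms by simp
next
  case y: False
  show ?thesis
  proof (cases "x = 0")
    case True
    have "y powr s = y powr (s - 1) * y" using y assms by (simp add: powr_diff)
    then have "y powr s + s * y powr (s - 1) * (0 - y) = (1 - s) * y powr s"
      by (simp add: algebra_simps)
    also have "\<dots> \<le> 0" using assms by (simp add: mult_nonpos_nonneg)
    finally show ?thesis using True assms by simp
  next
    case x: False
    have "s * y powr (s - 1) * (x - y) \<le> x powr s - y powr s"
      using y x assms
      by (intro convex_on_imp_above_tangent[where A = "{0<..}", OF powr_convex])
         (auto intro!: derivative_eq_intros simp: interior_open)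
    then show ?thesis by simp
  qed
qed

lemma powr_diff_ge_scaled_powr_diff:
  fixes a b T q q0 :: real
  assumes "0 < q0" "q0 < q" "0 \<le> a" "0 \<le> b" "0 \<le> T"
    and side: "(b \<le> a \<and> T \<le> b) \<or> (a \<le> b \<and> b \<le> T)"
  shows "(q / q0) * T powr (q - q0) * (a powr q0 - b powr q0) \<le> a powr q - b powr q"
proof -
  define s where "s = q / q0"
  have s: "1 \<le> s" using assms by (simp add: s_def)
  have "(a powr q0) powr s = a powr q" "(b powr q0) powr s = b powr q"
    "(b powr q0) powr (s - 1) = b powr (q - q0)"
    using assms by (simp_all add: powr_powr s_def algebra_simps diff_divide_distrib)
  then have tangent: "b powr q + s * b powr (q - q0) * (a powr q0 - b powr q0) \<le> a powr q"
    using powr_above_tangent[of "a powr q0" "b powr q0" s] s by simp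
  have "s * T powr (q - q0) * (a powr q0 - b powr q0)
      \<le> s * b powr (q - q0) * (a powr q0 - b powr q0)"
    using side
  proof
    assume "b \<le> a \<and> T \<le> b"
    then show ?thesis using assms s
      by (intro mult_right_mono mult_left_mono) (auto simp: powr_mono2)
  next
    assume "a \<le> b \<and> b \<le> T"
    then show ?thesis using assms s
      by (intro mult_right_mono_neg mult_left_mono) (auto simp: powr_mono2)
  qed
  with tangent show ?thesis by (simp add: s_def)
qed

lemma set_integral_nonneg_if_dominates_balanced:
  fixes u v :: "real \<Rightarrow> real"
  assumes "0 < c" "set_integrable lborel S u" "\<And>t. t \<in> S \<Longrightarrow> c * v t \<le> u t"
    and balanced: "(\<integral>\<^sup>+ t. indicator S t * ennreal (- v t) \<partial>lborel)
      \<le> (\<integral>\<^sup>+ t. indicator S t * ennreal (v t) \<partial>lborel)"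
  shows "0 \<le> (LINT t:S|lborel. u t)"
proof -
  define U where "U t = indicator S t * u t / c" for t
  have U: "integrable lborel U"
    using assms(2) unfolding U_def set_integrable_def by simp
  have v_le: "v t \<le> u t / c" if "t \<in> S" for t
    using assms(1) assms(3)[OF that] by (simp add: field_simps mult.commute)
  have "(\<integral>\<^sup>+ t. ennreal (- U t) \<partial>lborel) \<le> (\<integral>\<^sup>+ t. indicator S t * ennreal (- v t) \<partial>lborel)"
    using v_le by (intro nn_integral_mono) (auto simp: U_def indicator_def intro!: ennreal_leI)
  also note balanced
  also have "(\<integral>\<^sup>+ t. indicator S t * ennreal (v t) \<partial>lborel) \<le> (\<integral>\<^sup>+ t. ennreal (U t) \<partial>lborel)"
    using v_le by (intro nn_integral_mono) (auto simp: U_def indicator_def intro!: ennreal_leI)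
  finally have "enn2real (\<integral>\<^sup>+ t. ennreal (- U t) \<partial>lborel) \<le> enn2real (\<integral>\<^sup>+ t. ennreal (U t) \<partial>lborel)"
    using U by (intro enn2real_mono) (auto simp: real_integrable_def top.not_eq_extremum)
  then have "0 \<le> integral\<^sup>L lborel U" using real_lebesgue_integral_def[OF U] by simp
  also have "integral\<^sup>L lborel U = (LINT t:S|lborel. u t) / c"
    unfolding U_def set_lebesgue_integral_def by simp
  finally show ?thesis using assms(1) by (simp add: zero_le_divide_iff)
qed

lemma AE_eq_zero_if_nonpos_balanced:
  fixes v :: "real \<Rightarrow> real"
  assumes "set_borel_measurable borel S v" "\<And>t. t \<in> S \<Longrightarrow> v t \<le> 0"
    and balanced: "(\<integral>\<^sup>+ t. indicator S t * ennreal (- v t) \<partial>lborel)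
      \<le> (\<integral>\<^sup>+ t. indicator S t * ennreal (v t) \<partial>lborel)"
  shows "AE t in lborel. t \<in> S \<longrightarrow> v t = 0"
proof -
  have "(\<lambda>t. indicator S t * ennreal (v t)) = (\<lambda>_. 0)"
    using assms(2) by (auto simp: indicator_def fun_eq_iff ennreal_eq_0_iff)
  with balanced have "(\<integral>\<^sup>+ t. ennreal (- (indicator S t *\<^sub>R v t)) \<partial>lborel) = 0"
    by (simp add: indicator_mult_ennreal)
  moreover have "(\<lambda>t. ennreal (- (indicator S t *\<^sub>R v t))) \<in> borel_measurable lborel"
    using assms(1) unfolding set_borel_measurable_def by measurable
  ultimately have "AE t in lborel. ennreal (- (indicator S t *\<^sub>R v t)) = 0"
    by (simp add: nn_integral_0_iff_AE)
  then show ?thesis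
    by eventually_elim (use assms(2) in \<open>force simp: ennreal_eq_0_iff\<close>)
qed

lemma set_integral_nonneg_decreasing_weight:
  fixes k v :: "real \<Rightarrow> real"
  assumes k_pos: "\<And>t. 0 < t \<Longrightarrow> 0 < k t"
    and k_antimono: "\<And>s t. 0 < s \<Longrightarrow> s \<le> t \<Longrightarrow> k t \<le> k s"
    and sign_change: "\<And>s t. 0 < s \<Longrightarrow> 0 < t \<Longrightarrow> 0 < v s \<Longrightarrow> v t < 0 \<Longrightarrow> s < t"
    and "set_integrable lborel {0<..} (\<lambda>t. k t * v t)"
    and "set_borel_measurable borel {0<..} v"
    and balanced: "(\<integral>\<^sup>+ t. indicator {0<..} t * ennreal (- v t) \<partial>lborel)
      \<le> (\<integral>\<^sup>+ t. indicator {0<..} t * ennreal (v t) \<partial>lborel)"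
  shows "0 \<le> (LINT t:{0<..}|lborel. k t * v t)"
proof (cases "\<exists>s>0. 0 < v s")
  case False
  then have "v t \<le> 0" if "t \<in> {0<..}" for t
    using that by (metis greaterThan_iff not_less)
  then have "AE t in lborel. t \<in> {0<..} \<longrightarrow> v t = 0"
    by (rule AE_eq_zero_if_nonpos_balanced[OF assms(5) _ balanced])
  then show ?thesis unfolding set_lebesgue_integral_def
    by (intro integral_nonneg_AE) (auto elim!: eventually_mono)
next
  case True
  then obtain s1 where s1: "0 < s1" "0 < v s1" by blast
  show ?thesis
  proof (cases "\<exists>t>0. v t < 0")
    case False
    then have "0 \<le> k t * v t" if "0 < t" for t
      using that k_pos[OF that] by (metis less_imp_le mult_nonneg_nonneg not_less)
    then show ?thesis unfolding set_lebesgue_integral_def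
      by (intro integral_nonneg_AE AE_I2) (auto simp: indicator_def)
  next
    case True
    then obtain t1 where t1: "0 < t1" "v t1 < 0" by blast
    define s0 where "s0 = Sup {s. 0 < s \<and> 0 < v s}"
    have "bdd_above {s. 0 < s \<and> 0 < v s}"
      using sign_change t1 by (intro bdd_aboveI[of _ t1]) (auto intro: less_imp_le)
    then have left: "s \<le> s0" if "0 < s" "0 < v s" for s
      unfolding s0_def using that by (intro cSup_upper) auto
    have right: "s0 \<le> t" if "0 < t" "v t < 0" for t
      unfolding s0_def using that s1 sign_change by (intro cSup_least) (auto intro: less_imp_le)
    have s0: "0 < s0" using left[OF s1] s1 by simp
    show ?thesis
    proof (rule set_integral_nonneg_if_dominates_balanced[OF k_pos[OF s0] assms(4) _ balanced])
      fix t :: real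
      assume "t \<in> {0<..}"
      then have t: "0 < t" by simp
      consider "0 < v t" | "v t < 0" | "v t = 0" by linarith
      then show "k s0 * v t \<le> k t * v t"
      proof cases
        case 1
        then show ?thesis using k_antimono[OF t left[OF t 1]] by (intro mult_right_mono) auto
      next
        case 2
        then show ?thesis using k_antimono[OF s0 right[OF t 2]] by (intro mult_right_mono_neg) auto
      qed simp
    qed
  qed
qed

lemma weighted_powr_difference_nonneg_same_weight:
  fixes F G :: "real \<Rightarrow> real" and p0 q0 p q \<sigma> :: real
  assumes "0 < q0" "q0 < q" "0 < p" "q / p = q0 / p0" "0 < \<sigma>"
    and nonneg: "\<And>t. 0 \<le> F t" "\<And>t. 0 \<le> G t"
    and cross_lower: "\<And>t. 0 < t \<Longrightarrow> G t < F t \<Longrightarrow> \<sigma> \<le> G t"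
    and cross_upper: "\<And>t. 0 < t \<Longrightarrow> F t < G t \<Longrightarrow> G t \<le> \<sigma>"
    and balanced: "(\<integral>\<^sup>+ t. indicator {0<..} t * ennreal (- ((q0 / p0) * t powr (q0 / p0 - 1) *
           (F t powr q0 - G t powr q0))) \<partial>lborel)
       \<le> (\<integral>\<^sup>+ t. indicator {0<..} t * ennreal ((q0 / p0) * t powr (q0 / p0 - 1) *
           (F t powr q0 - G t powr q0)) \<partial>lborel)"
    and integrable: "set_integrable lborel {0<..}
      (\<lambda>t. (q / p) * t powr (q / p - 1) * (F t powr q - G t powr q))"
  shows "0 \<le> (LINT t:{0<..}|lborel. (q / p) * t powr (q / p - 1) * (F t powr q - G t powr q))"
proof (rule set_integral_nonneg_if_dominates_balanced[OF _ integrable _ balanced])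
  show "0 < (q / q0) * \<sigma> powr (q - q0)" using assms(1,2,5) by simp
  fix t :: real
  assume t: "t \<in> {0<..}"
  have "(q / q0) * \<sigma> powr (q - q0) * (F t powr q0 - G t powr q0) \<le> F t powr q - G t powr q"
  proof (cases "F t" "G t" rule: linorder_cases)
    case less
    then show ?thesis using cross_upper[of t] t assms(1,2,5) nonneg[of t]
      by (intro powr_diff_ge_scaled_powr_diff) auto
  next
    case greater
    then show ?thesis using cross_lower[of t] t assms(1,2,5) nonneg[of t]
      by (intro powr_diff_ge_scaled_powr_diff) auto
  qed simp
  moreover have "0 \<le> (q / p) * t powr (q / p - 1)" using assms(1-3) by simp
  ultimately show "(q / q0) * \<sigma> powr (q - q0) * ((q0 / p0) * t powr (q0 / p0 - 1) * (F t powr q0 - G t powr q0))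
      \<le> (q / p) * t powr (q / p - 1) * (F t powr q - G t powr q)"
    using assms(4) mult_left_mono by (fastforce simp: mult_ac)
qed

lemma weighted_powr_difference_nonneg_decreasing_ratio:
  fixes F G :: "real \<Rightarrow> real" and p0 p q \<sigma> :: real
  assumes "0 < p0" "p0 < p" "0 < q"
    and nonneg: "\<And>t. 0 \<le> F t" "\<And>t. 0 \<le> G t"
    and F_antimono: "\<And>s t. 0 < s \<Longrightarrow> s \<le> t \<Longrightarrow> F t \<le> F s"
    and cross_lower: "\<And>t. 0 < t \<Longrightarrow> G t < F t \<Longrightarrow> \<sigma> \<le> G t"
    and cross_upper: "\<And>t. 0 < t \<Longrightarrow> F t < G t \<Longrightarrow> G t \<le> \<sigma>"
    and meas: "set_borel_measurable borel {0<..} F" "set_borel_measurable borel {0<..} G"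
    and balanced: "(\<integral>\<^sup>+ t. indicator {0<..} t * ennreal (- ((q / p0) * t powr (q / p0 - 1) *
           (F t powr q - G t powr q))) \<partial>lborel)
       \<le> (\<integral>\<^sup>+ t. indicator {0<..} t * ennreal ((q / p0) * t powr (q / p0 - 1) *
           (F t powr q - G t powr q)) \<partial>lborel)"
    and integrable: "set_integrable lborel {0<..}
      (\<lambda>t. (q / p) * t powr (q / p - 1) * (F t powr q - G t powr q))"
  shows "0 \<le> (LINT t:{0<..}|lborel. (q / p) * t powr (q / p - 1) * (F t powr q - G t powr q))"
proof -
  define k where "k t = (p0 / p) * t powr (q / p - q / p0)" for t
  define v where "v t = (q / p0) * t powr (q / p0 - 1) * (F t powr q - G t powr q)" for t
  have u_eq: "(q / p) * t powr (q / p - 1) * (F t powr q - G t powr q) = k t * v t" if "0 < t" for t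
    using that assms(1) by (simp add: k_def v_def powr_add[symmetric])
  have "0 \<le> (LINT t:{0<..}|lborel. k t * v t)"
  proof (rule set_integral_nonneg_decreasing_weight)
    show "0 < k t" if "0 < t" for t using that assms(1,2) by (simp add: k_def)
    have "q / p - q / p0 \<le> 0" using assms(1-3) by (simp add: frac_le)
    then show "k t \<le> k s" if "0 < s" "s \<le> t" for s t
      using powr_mono2'[OF _ that] assms(1,2) unfolding k_def by (intro mult_left_mono) auto
    have less_iff: "0 < v t \<longleftrightarrow> G t < F t" "v t < 0 \<longleftrightarrow> F t < G t" if "0 < t" for t
    proof -
      have "0 < (q / p0) * t powr (q / p0 - 1)" using that assms(1,3) by simp
      moreover have "0 < F t powr q - G t powr q \<longleftrightarrow> G t < F t"
        "F t powr q - G t powr q < 0 \<longleftrightarrow> F t < G t"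
        using nonneg[of t] assms(3) by (smt (verit) powr_less_mono2 powr_mono2)+
      ultimately show "0 < v t \<longleftrightarrow> G t < F t" "v t < 0 \<longleftrightarrow> F t < G t"
        unfolding v_def by (metis mult_less_cancel_left_pos mult_zero_right)+
    qed
    show "s < t" if "0 < s" "0 < t" "0 < v s" "v t < 0" for s t
    proof (rule ccontr)
      assume "\<not> s < t"
      then have "F s \<le> F t" using that by (intro F_antimono) auto
      moreover have "\<sigma> \<le> G s" "G t \<le> \<sigma>" using that cross_lower cross_upper less_iff by auto
      ultimately show False using that less_iff by force
    qed
    have "set_integrable lborel {0<..} (\<lambda>t. k t * v t) \<longleftrightarrow>
        set_integrable lborel {0<..} (\<lambda>t. (q / p) * t powr (q / p - 1) * (F t powr q - G t powr q))"
      by (rule set_integrable_cong) (use u_eq in auto)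
    with integrable show "set_integrable lborel {0<..} (\<lambda>t. k t * v t)" by blast
    have "(\<lambda>t. indicator {0<..} t *\<^sub>R v t) = (\<lambda>t. indicator {0<..} t * ((q / p0) * t powr (q / p0 - 1) *
        ((indicator {0<..} t *\<^sub>R F t) powr q - (indicator {0<..} t *\<^sub>R G t) powr q)))"
      by (auto simp: v_def indicator_def fun_eq_iff)
    then show "set_borel_measurable borel {0<..} v"
      using meas unfolding set_borel_measurable_def by simp
    show "(\<integral>\<^sup>+ t. indicator {0<..} t * ennreal (- v t) \<partial>lborel)
        \<le> (\<integral>\<^sup>+ t. indicator {0<..} t * ennreal (v t) \<partial>lborel)"
      using balanced by (simp add: v_def)
  qed
  also have "(LINT t:{0<..}|lborel. k t * v t)
      = (LINT t:{0<..}|lborel. (q / p) * t powr (q / p - 1) * (F t powr q - G t powr q))"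
    by (rule set_lebesgue_integral_cong) (use u_eq in auto)
  finally show ?thesis .
qed

lemma distr_fun_antimono:
  assumes "f \<in> borel_measurable M" "x \<le> y"
  shows "distr_fun M f y \<le> distr_fun M f x"
  unfolding distr_fun_def using assms
  by (intro emeasure_mono) (auto, measurable)

lemma rearr_antimono:
  assumes "s \<le> t" shows "rearr M f t \<le> rearr M f s"
  unfolding rearr_def using assms
  by (intro Inf_superset_mono image_mono) (auto intro: order_trans ennreal_leI)

lemma rearr_le_if_distr_le:
  assumes f: "f \<in> borel_measurable M" and "rearr M f t < ennreal \<tau>"
    and "distr_fun M g \<tau> \<le> distr_fun M f \<tau>"
  shows "rearr M g t \<le> ennreal \<tau>"
proof -
  obtain \<tau>' where \<tau>': "0 < \<tau>'" "distr_fun M f \<tau>' \<le> ennreal t" "ennreal \<tau>' < ennreal \<tau>"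
    using assms(2) unfolding rearr_def by (auto simp: Inf_less_iff)
  then have "\<tau>' < \<tau>" "0 < \<tau>" by (auto simp: ennreal_less_iff)
  with \<tau>' have "distr_fun M g \<tau> \<le> ennreal t"
    using distr_fun_antimono[OF f, of \<tau>' \<tau>] assms(3) by auto
  with \<open>0 < \<tau>\<close> show ?thesis unfolding rearr_def by (auto intro: Inf_lower)
qed

lemma rearr_crossing_lower:
  assumes g: "g \<in> borel_measurable M"
    and below: "\<And>\<tau>. 0 < \<tau> \<Longrightarrow> \<tau> < \<sigma> \<Longrightarrow> distr_fun M f \<tau> \<le> distr_fun M g \<tau>"
    and less: "rearr M g t < rearr M f t"
  shows "ennreal \<sigma> \<le> rearr M g t"
proof (rule ccontr)
  assume "\<not> ennreal \<sigma> \<le> rearr M g t"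
  then have "rearr M g t < min (rearr M f t) (ennreal \<sigma>)" using less by auto
  then obtain x where x: "rearr M g t < x" "x < min (rearr M f t) (ennreal \<sigma>)" using dense by blast
  moreover have "0 < x" using x(1) by (rule le_less_trans[OF zero_le])
  ultimately obtain \<tau> where \<tau>: "x = ennreal \<tau>" "0 < \<tau>" "\<tau> < \<sigma>"
    by (cases x) (auto simp: ennreal_less_iff)
  have "rearr M f t \<le> ennreal \<tau>"
    using rearr_le_if_distr_le[OF g] x \<tau> below by auto
  then show False using x \<tau> by auto
qed

lemma rearr_crossing_upper:
  assumes f: "f \<in> borel_measurable M"
    and above: "\<And>\<tau>. \<sigma> < \<tau> \<Longrightarrow> distr_fun M g \<tau> \<le> distr_fun M f \<tau>"
    and less: "rearr M f t < rearr M g t"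
  shows "rearr M g t \<le> ennreal \<sigma>"
proof (rule ccontr)
  assume "\<not> rearr M g t \<le> ennreal \<sigma>"
  then have "max (rearr M f t) (ennreal \<sigma>) < rearr M g t" using less by auto
  then obtain x where x: "max (rearr M f t) (ennreal \<sigma>) < x" "x < rearr M g t" using dense by blast
  moreover have "0 < x" using x(1) by (rule le_less_trans[OF zero_le])
  ultimately obtain \<tau> where \<tau>: "x = ennreal \<tau>" "0 < \<tau>"
    by (cases x) (auto simp: ennreal_less_iff)
  then have "\<sigma> < \<tau>" using x by (cases "0 \<le> \<sigma>") (auto simp: ennreal_less_iff)
  have "rearr M g t \<le> ennreal \<tau>"
    using rearr_le_if_distr_le[OF f] x \<tau> above \<open>\<sigma> < \<tau>\<close> by auto
  then show False using x \<tau> by auto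
qed

lemma enn2real_rearr_crossing_lower:
  assumes "g \<in> borel_measurable M"
    and "\<And>\<tau>. 0 < \<tau> \<Longrightarrow> \<tau> < \<sigma> \<Longrightarrow> distr_fun M f \<tau> \<le> distr_fun M g \<tau>"
    and "rearr M g t < \<infinity>" "enn2real (rearr M g t) < enn2real (rearr M f t)"
  shows "\<sigma> \<le> enn2real (rearr M g t)"
proof -
  obtain G where G: "rearr M g t = ennreal G" "0 \<le> G"
    using assms(3) by (cases "rearr M g t") auto
  have "rearr M g t < rearr M f t"
    using assms(4) G by (cases "rearr M f t") (auto simp: ennreal_less_iff)
  then have "ennreal \<sigma> \<le> rearr M g t" using rearr_crossing_lower[OF assms(1)] assms(2) by blast
  then show ?thesis using G by (simp add: ennreal_le_iff)
qed

lemma enn2real_rearr_crossing_upper: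
  assumes "f \<in> borel_measurable M" "0 \<le> \<sigma>"
    and "\<And>\<tau>. \<sigma> < \<tau> \<Longrightarrow> distr_fun M g \<tau> \<le> distr_fun M f \<tau>"
    and "rearr M f t < \<infinity>" "enn2real (rearr M f t) < enn2real (rearr M g t)"
  shows "enn2real (rearr M g t) \<le> \<sigma>"
proof -
  obtain F where F: "rearr M f t = ennreal F" "0 \<le> F"
    using assms(4) by (cases "rearr M f t") auto
  have "rearr M f t < rearr M g t"
    using assms(5) F by (cases "rearr M g t") (auto simp: ennreal_less_iff)
  then have "rearr M g t \<le> ennreal \<sigma>" using rearr_crossing_upper[OF assms(1)] assms(3) by blast
  then show ?thesis using enn2real_mono[of "rearr M g t" "ennreal \<sigma>"] assms(2) by simp
qed

lemma set_borel_measurable_enn2real_rearr: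
  assumes fin: "\<And>t. 0 < t \<Longrightarrow> rearr M f t < \<infinity>"
  shows "set_borel_measurable borel {0<..} (\<lambda>t. enn2real (rearr M f t))"
proof -
  have "mono_on {0<..} (\<lambda>t. - enn2real (rearr M f t))"
    by (intro mono_onI) (auto intro!: enn2real_mono rearr_antimono fin[unfolded infinity_ennreal_def])
  then have "(\<lambda>t. - (- enn2real (rearr M f t))) \<in> borel_measurable (restrict_space borel {0<..})"
    by (intro borel_measurable_uminus borel_measurable_mono_on_fnc)
  then show ?thesis unfolding set_borel_measurable_def
    by (subst (asm) borel_measurable_restrict_space_iff) auto
qed

lemma lorentz_integral_eq_set_integral:
  assumes "0 < p" "0 < q" "in_lorentz p q M h" "\<And>t. 0 < t \<Longrightarrow> rearr M h t < \<infinity>"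
  shows "set_integrable lborel {0<..} (\<lambda>t. (q / p) * t powr (q / p - 1) * enn2real (rearr M h t) powr q)"
    and "lorentz_integral p q M h
      = ennreal (LINT t:{0<..}|lborel. (q / p) * t powr (q / p - 1) * enn2real (rearr M h t) powr q)"
proof -
  define u where "u t = indicator {0<..} t * ((q / p) * t powr (q / p - 1) * enn2real (rearr M h t) powr q)" for t
  have u_nonneg: "0 \<le> u t" for t using assms(1,2) by (simp add: u_def)
  have nn_eq: "lorentz_integral p q M h = (\<integral>\<^sup>+ t. ennreal (u t) \<partial>lborel)"
    unfolding lorentz_integral_def
  proof (intro nn_integral_cong)
    fix t :: real
    show "indicator {0<..} t * epowr (rearr M h t) q * ennreal (q / p * t powr (q / p - 1)) = ennreal (u t)"
      using assms(1,2) assms(4)[of t]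
      by (cases "0 < t") (auto simp: u_def epowr_def ennreal_mult'[symmetric] mult_ac less_top[symmetric])
  qed
  have "u \<in> borel_measurable lborel"
  proof -
    have "u = (\<lambda>t. indicator {0<..} t * ((q / p) * t powr (q / p - 1) *
        (indicator {0<..} t *\<^sub>R enn2real (rearr M h t)) powr q))"
      by (auto simp: u_def indicator_def fun_eq_iff)
    then show ?thesis
      using set_borel_measurable_enn2real_rearr[OF assms(4)] unfolding set_borel_measurable_def by simp
  qed
  with nn_eq have u: "integrable lborel u"
    using assms(3) u_nonneg by (intro integrableI_nonneg) (auto simp: in_lorentz_def)
  then show "set_integrable lborel {0<..} (\<lambda>t. (q / p) * t powr (q / p - 1) * enn2real (rearr M h t) powr q)"
    unfolding set_integrable_def u_def[abs_def] by simp
  have "integral\<^sup>L lborel u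
      = (LINT t:{0<..}|lborel. (q / p) * t powr (q / p - 1) * enn2real (rearr M h t) powr q)"
    by (simp add: set_lebesgue_integral_def u_def[abs_def])
  with nn_eq show "lorentz_integral p q M h
      = ennreal (LINT t:{0<..}|lborel. (q / p) * t powr (q / p - 1) * enn2real (rearr M h t) powr q)"
    using nn_integral_eq_integral[OF u] u_nonneg by simp
qed

lemma lorentz_norm_le_if_difference_nonneg:
  assumes "0 < p" "0 < q" "in_lorentz p q M f" "in_lorentz p q M g"
    and "\<And>t. 0 < t \<Longrightarrow> rearr M f t < \<infinity>" "\<And>t. 0 < t \<Longrightarrow> rearr M g t < \<infinity>"
    and "0 \<le> (LINT t:{0<..}|lborel. (q / p) * t powr (q / p - 1) *
      (enn2real (rearr M f t) powr q - enn2real (rearr M g t) powr q))"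
  shows "lorentz_norm p q M g \<le> lorentz_norm p q M f"
proof -
  note f = lorentz_integral_eq_set_integral[OF assms(1-3,5)]
    and g = lorentz_integral_eq_set_integral[OF assms(1,2,4,6)]
  have "0 \<le> (LINT t:{0<..}|lborel. (q / p) * t powr (q / p - 1) * enn2real (rearr M f t) powr q)
      - (LINT t:{0<..}|lborel. (q / p) * t powr (q / p - 1) * enn2real (rearr M g t) powr q)"
    using assms(7) set_integral_diff(2)[OF f(1) g(1)] by (simp add: right_diff_distrib)
  then have "enn2real (lorentz_integral p q M g) \<le> enn2real (lorentz_integral p q M f)"
    by (simp add: f(2) g(2) enn2real_mono ennreal_leI)
  then show ?thesis unfolding lorentz_norm_def using assms(2) by (intro powr_mono2) auto
qed

theorem mainTheorem4:
  fixes M :: "'a measure" and f g :: "'a \<Rightarrow> 'b::real_normed_vector"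
    and p0 q0 p q \<tau>0 :: real
  assumes "0 < p0" "0 < q0" "0 < p" "0 < q"
    and cases: "(q > q0 \<and> q / p = q0 / p0) \<or> (q = q0 \<and> p > p0)"
    and "sigma_finite_measure M"
    and "f \<in> borel_measurable M" "g \<in> borel_measurable M"
    and "0 < \<tau>0"
    and "\<And>\<tau>. 0 < \<tau> \<Longrightarrow> \<tau> < \<tau>0 \<Longrightarrow> distr_fun M f \<tau> \<le> distr_fun M g \<tau>"
    and "\<And>\<tau>. \<tau> > \<tau>0 \<Longrightarrow> distr_fun M f \<tau> \<ge> distr_fun M g \<tau>"
    and fin_f: "\<And>t. 0 < t \<Longrightarrow> rearr M f t < \<infinity>"
    and fin_g: "\<And>t. 0 < t \<Longrightarrow> rearr M g t < \<infinity>"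
    and exists0:
      "(\<integral>\<^sup>+ t. indicator {0<..} t * ennreal (- ((q0 / p0) * t powr (q0 / p0 - 1) *
           (enn2real (rearr M f t) powr q0 - enn2real (rearr M g t) powr q0))) \<partial>lborel) < \<infinity>"
    and nonneg0:
      "(\<integral>\<^sup>+ t. indicator {0<..} t * ennreal (- ((q0 / p0) * t powr (q0 / p0 - 1) *
           (enn2real (rearr M f t) powr q0 - enn2real (rearr M g t) powr q0))) \<partial>lborel)
       \<le> (\<integral>\<^sup>+ t. indicator {0<..} t * ennreal ((q0 / p0) * t powr (q0 / p0 - 1) *
           (enn2real (rearr M f t) powr q0 - enn2real (rearr M g t) powr q0)) \<partial>lborel)"
    and L1: "set_integrable lborel {0<..}
      (\<lambda>t. (enn2real (rearr M f t) powr q - enn2real (rearr M g t) powr q) * t powr (q / p - 1))"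
  shows "(LINT t:{0<..}|lborel. (q / p) * t powr (q / p - 1) *
            (enn2real (rearr M f t) powr q - enn2real (rearr M g t) powr q)) \<ge> 0
         \<and> (in_lorentz p q M f \<and> in_lorentz p q M g \<longrightarrow> lorentz_norm p q M g \<le> lorentz_norm p q M f)"
proof -
  have cross_lower: "\<tau>0 \<le> enn2real (rearr M g t)"
    if "0 < t" "enn2real (rearr M g t) < enn2real (rearr M f t)" for t
    using enn2real_rearr_crossing_lower[OF assms(8)] assms(10) fin_g[OF that(1)] that(2) by blast
  have cross_upper: "enn2real (rearr M g t) \<le> \<tau>0"
    if "0 < t" "enn2real (rearr M f t) < enn2real (rearr M g t)" for t
    using enn2real_rearr_crossing_upper[OF assms(7) less_imp_le[OF assms(9)]] assms(11)
      fin_f[OF that(1)] that(2) by blast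
  have rearr_f_antimono: "enn2real (rearr M f t) \<le> enn2real (rearr M f s)" if "0 < s" "s \<le> t" for s t
    using that fin_f[OF that(1)] by (intro enn2real_mono rearr_antimono) (auto simp: less_top)
  have meas: "set_borel_measurable borel {0<..} (\<lambda>t. enn2real (rearr M f t))"
    "set_borel_measurable borel {0<..} (\<lambda>t. enn2real (rearr M g t))"
    by (rule set_borel_measurable_enn2real_rearr, fact)+
  have integrable: "set_integrable lborel {0<..} (\<lambda>t. (q / p) * t powr (q / p - 1) *
      (enn2real (rearr M f t) powr q - enn2real (rearr M g t) powr q))"
    using set_integrable_mult_right[OF L1, of "q / p"] by (simp add: mult_ac)
  have nonneg: "0 \<le> (LINT t:{0<..}|lborel. (q / p) * t powr (q / p - 1) *
      (enn2real (rearr M f t) powr q - enn2real (rearr M g t) powr q))"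
    using cases
  proof (elim disjE conjE)
    assume "q0 < q" "q / p = q0 / p0"
    then show ?thesis
      by (rule weighted_powr_difference_nonneg_same_weight[OF assms(2) _ assms(3) _ assms(9)])
        (fact enn2real_nonneg cross_lower cross_upper nonneg0 integrable)+
  next
    assume q: "q = q0" and "p0 < p"
    show ?thesis
      by (rule weighted_powr_difference_nonneg_decreasing_ratio[OF assms(1) \<open>p0 < p\<close> assms(4)])
        (fact enn2real_nonneg rearr_f_antimono cross_lower cross_upper meas integrable nonneg0[folded q])+
  qed
  moreover have "lorentz_norm p q M g \<le> lorentz_norm p q M f" if "in_lorentz p q M f" "in_lorentz p q M g"
    by (rule lorentz_norm_le_if_difference_nonneg[OF assms(3,4) that]) (fact fin_f fin_g nonneg)+
  ultimately show ?thesis by blast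
qed

end
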